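(* Let $(V,H)$ be a $p+q$ almost-product structure on an $n$-dimensional pseudo-Riemannian manifold $(M,g)$, with projectors $v,h$. The following are equivalent: (i) $(V,H)$ is totally geodesic; (ii) $C\,v+D\,h$ is a Killing tensor for arbitrary constants $C,D$; (iii) $C\,(q\,v-p\,h)$ is a conformal tensor for an arbitrary constant $C$.
   Context: A $p+q$ almost-product structure: $V$ a rank-$p$ distribution on which $g$ is nondegenerate, $H=V^\perp$ of rank $q=n-p$; $v,h$ the orthogonal projectors, regarded as covariant 2-tensors via $g$ ($g=v+h$). Generalized second fundamental form $Q_v(x,y)=h(\nabla_{v(x)}v(y))$ with symmetric part $S_v$, and analogously $S_h$; $(V,H)$ is totally geodesic if $S_v=0$ and $S_h=0$. Killing tensor: symmetric $K$ with $\nabla_{(a}K_{bc)}=0$. Conformal tensor: traceless symmetric $T$ with $\nabla_{(a}T_{bc)}=g_{(ab}t_{c)}$ for some 1-form $t$. *)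

theory Defs
  imports "HOL-Analysis.Analysis"
begin

text \<open>Local (coordinate) model: the manifold is an open set U of real^'n,
  'n a finite index type with CARD('n) = n. Tensor fields are given by
  their components in the coordinate frame.\<close>

type_synonym 'n tensor2 = "real^'n \<Rightarrow> 'n \<Rightarrow> 'n \<Rightarrow> real"

definition pd :: "(real^'n \<Rightarrow> real) \<Rightarrow> 'n \<Rightarrow> real^'n \<Rightarrow> real" where
  "pd f k x = deriv (\<lambda>t. f (x + t *\<^sub>R axis k 1)) 0"

definition gform :: "'n::finite tensor2 \<Rightarrow> real^'n \<Rightarrow> real^'n \<Rightarrow> real^'n \<Rightarrow> real" where
  "gform g x X Y = (\<Sum>i\<in>UNIV. \<Sum>j\<in>UNIV. X$i * g x i j * Y$j)"

definition ginv :: "'n::finite tensor2 \<Rightarrow> 'n tensor2" where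
  "ginv g x i j = matrix_inv (\<chi> a b. g x a b) $ i $ j"

definition pseudo_riemannian_on :: "(real^'n::finite) set \<Rightarrow> 'n tensor2 \<Rightarrow> bool" where
  "pseudo_riemannian_on U g \<longleftrightarrow> open U \<and>
     (\<forall>x\<in>U. (\<forall>i j. g x i j = g x j i) \<and> det (\<chi> a b. g x a b) \<noteq> 0 \<and>
        (\<forall>i j. (\<lambda>y. g y i j) differentiable (at x)))"

text \<open>Christoffel symbols of the Levi-Civita connection: christ g x a b c = Gamma^a_{bc}.\<close>
definition christ :: "'n::finite tensor2 \<Rightarrow> real^'n \<Rightarrow> 'n \<Rightarrow> 'n \<Rightarrow> 'n \<Rightarrow> real" where
  "christ g x a b c = (1/2) * (\<Sum>d\<in>UNIV. ginv g x a d *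
      (pd (\<lambda>y. g y d c) b x + pd (\<lambda>y. g y d b) c x - pd (\<lambda>y. g y b c) d x))"

definition covvec :: "'n::finite tensor2 \<Rightarrow> real^'n \<Rightarrow> real^'n \<Rightarrow> (real^'n \<Rightarrow> real^'n) \<Rightarrow> real^'n" where
  "covvec g x Z W = (\<chi> d. \<Sum>c\<in>UNIV. Z$c *
      (pd (\<lambda>y. W y $ d) c x + (\<Sum>e\<in>UNIV. christ g x d c e * W x $ e)))"

text \<open>Covariant derivative of a covariant 2-tensor: cov2 g T x a b c = nabla_a T_{bc}.\<close>
definition cov2 :: "'n::finite tensor2 \<Rightarrow> 'n tensor2 \<Rightarrow> real^'n \<Rightarrow> 'n \<Rightarrow> 'n \<Rightarrow> 'n \<Rightarrow> real" where
  "cov2 g T x a b c = pd (\<lambda>y. T y b c) a x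
      - (\<Sum>e\<in>UNIV. christ g x e a b * T x e c) - (\<Sum>e\<in>UNIV. christ g x e a c * T x b e)"

definition sym3 :: "('n \<Rightarrow> 'n \<Rightarrow> 'n \<Rightarrow> real) \<Rightarrow> 'n \<Rightarrow> 'n \<Rightarrow> 'n \<Rightarrow> real" where
  "sym3 F a b c = (F a b c + F a c b + F b a c + F b c a + F c a b + F c b a) / 6"

definition killing_tensor_on :: "(real^'n::finite) set \<Rightarrow> 'n tensor2 \<Rightarrow> 'n tensor2 \<Rightarrow> bool" where
  "killing_tensor_on U g K \<longleftrightarrow>
     (\<forall>x\<in>U. (\<forall>a b. K x a b = K x b a) \<and> (\<forall>a b c. sym3 (cov2 g K x) a b c = 0))"

definition conformal_tensor_on :: "(real^'n::finite) set \<Rightarrow> 'n tensor2 \<Rightarrow> 'n tensor2 \<Rightarrow> bool" where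
  "conformal_tensor_on U g T \<longleftrightarrow>
     (\<forall>x\<in>U. (\<forall>a b. T x a b = T x b a) \<and> (\<Sum>a\<in>UNIV. \<Sum>b\<in>UNIV. ginv g x a b * T x a b) = 0) \<and>
     (\<exists>t :: real^'n \<Rightarrow> 'n \<Rightarrow> real. \<forall>x\<in>U. \<forall>a b c.
        sym3 (cov2 g T x) a b c = sym3 (\<lambda>a b c. g x a b * t x c) a b c)"

text \<open>A p+q almost-product structure: V assigns to each point a p-dimensional
  subspace on which g is nondegenerate; H = V^perp. The g-orthogonal projector onto V
  (as an endomorphism/matrix) and the complementary one onto H:\<close>

definition vmat :: "'n::finite tensor2 \<Rightarrow> (real^'n \<Rightarrow> (real^'n) set) \<Rightarrow> real^'n \<Rightarrow> real^'n^'n" where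
  "vmat g V x = (THE A. \<forall>X. A *v X \<in> V x \<and> (\<forall>Y\<in>V x. gform g x (X - A *v X) Y = 0))"

definition hmat :: "'n::finite tensor2 \<Rightarrow> (real^'n \<Rightarrow> (real^'n) set) \<Rightarrow> real^'n \<Rightarrow> real^'n^'n" where
  "hmat g V x = mat 1 - vmat g V x"

text \<open>The projectors regarded as covariant 2-tensors via g (so g = v + h).\<close>
definition vcov :: "'n::finite tensor2 \<Rightarrow> (real^'n \<Rightarrow> (real^'n) set) \<Rightarrow> 'n tensor2" where
  "vcov g V x a b = gform g x (vmat g V x *v axis a 1) (axis b 1)"

definition hcov :: "'n::finite tensor2 \<Rightarrow> (real^'n \<Rightarrow> (real^'n) set) \<Rightarrow> 'n tensor2" where
  "hcov g V x a b = gform g x (hmat g V x *v axis a 1) (axis b 1)"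

definition almost_product_on ::
  "(real^'n::finite) set \<Rightarrow> 'n tensor2 \<Rightarrow> (real^'n \<Rightarrow> (real^'n) set) \<Rightarrow> nat \<Rightarrow> bool" where
  "almost_product_on U g V p \<longleftrightarrow>
     (\<forall>x\<in>U. subspace (V x) \<and> dim (V x) = p \<and>
        (\<forall>X\<in>V x. (\<forall>Y\<in>V x. gform g x X Y = 0) \<longrightarrow> X = 0) \<and>
        (\<forall>i j. (\<lambda>y. vmat g V y $ i $ j) differentiable (at x)))"

text \<open>Generalized second fundamental forms (H-valued, resp. V-valued), evaluated on the
  coordinate vectors: Qv x a b = h(nabla_{v(e_a)} v(e_b)), Qh x a b = v(nabla_{h(e_a)} h(e_b)).\<close>
definition Qv :: "'n::finite tensor2 \<Rightarrow> (real^'n \<Rightarrow> (real^'n) set) \<Rightarrow> real^'n \<Rightarrow> 'n \<Rightarrow> 'n \<Rightarrow> real^'n" where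
  "Qv g V x a b = hmat g V x *v
     covvec g x (vmat g V x *v axis a 1) (\<lambda>y. vmat g V y *v axis b 1)"

definition Qh :: "'n::finite tensor2 \<Rightarrow> (real^'n \<Rightarrow> (real^'n) set) \<Rightarrow> real^'n \<Rightarrow> 'n \<Rightarrow> 'n \<Rightarrow> real^'n" where
  "Qh g V x a b = vmat g V x *v
     covvec g x (hmat g V x *v axis a 1) (\<lambda>y. hmat g V y *v axis b 1)"

definition Sv where "Sv g V x a b = (1/2) *\<^sub>R (Qv g V x a b + Qv g V x b a)"
definition Sh where "Sh g V x a b = (1/2) *\<^sub>R (Qh g V x a b + Qh g V x b a)"

definition totally_geodesic_on ::
  "(real^'n::finite) set \<Rightarrow> 'n tensor2 \<Rightarrow> (real^'n \<Rightarrow> (real^'n) set) \<Rightarrow> bool" where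
  "totally_geodesic_on U g V \<longleftrightarrow> (\<forall>x\<in>U. \<forall>a b. Sv g V x a b = 0 \<and> Sh g V x a b = 0)"

end

theory Submission
  imports Defs
begin

(*
  At a point, let P be the g-self-adjoint idempotent matrix of v and N k the matrix of
  nabla_k v. Differentiating P^2 = P gives N P + P N = N, so each N k maps V into H and
  H into V, and (nabla_X v)(Y, Z) = g(N_X Y, Z) is symmetric in Y and Z. Splitting Y and Z
  into their V- and H-components writes the cyclic sum of nabla v in terms of the
  symmetrisations of Q_v and Q_h; by polarisation it vanishes exactly when S_v = S_h = 0.

  Since nabla g = 0 and h = g - v, the covariant derivatives of C v + D h and of
  C (q v - p h) are (C - D) nabla v and C n nabla v, and q v - p h is traceless because
  tr v = p and tr h = q. Finally, if the symmetrisation of nabla v equals that of g_ab t_c,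
  then on V x V x V, where the cyclic sum of nabla v vanishes, only the metric term is
  left; nondegeneracy of g on V forces t = 0 on V, and likewise on H.
*)

section \<open>Directional derivatives in coordinates\<close>

lemma pd_eqI:
  "((\<lambda>t. f (x + t *\<^sub>R axis k 1)) has_real_derivative d) (at 0) \<Longrightarrow> pd f k x = d"
  by (simp add: pd_def DERIV_imp_deriv)

lemma has_real_derivative_pd:
  assumes "f differentiable (at x)"
  shows "((\<lambda>t. f (x + t *\<^sub>R axis k 1)) has_real_derivative pd f k x) (at 0)"
proof -
  have "(\<lambda>t::real. x + t *\<^sub>R axis k (1::real)) differentiable (at 0)"
    by (intro derivative_intros)
  then have "(f \<circ> (\<lambda>t::real. x + t *\<^sub>R axis k (1::real))) differentiable (at 0)"
    using assms by (intro differentiable_chain_at) auto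
  then have "(\<lambda>t. f (x + t *\<^sub>R axis k 1)) differentiable (at 0)"
    by (simp add: o_def)
  then show ?thesis
    unfolding pd_def using DERIV_deriv_iff_real_differentiable by blast
qed

lemma pd_cong:
  assumes "open U" "x \<in> U" "\<And>y. y \<in> U \<Longrightarrow> f y = h y"
  shows "pd f k x = pd h k x"
proof -
  have "((\<lambda>t::real. x + t *\<^sub>R axis k (1::real)) \<longlongrightarrow> x + 0 *\<^sub>R axis k 1) (nhds 0)"
    by (intro tendsto_intros) (simp add: tendsto_ident_at filterlim_ident)
  then have "((\<lambda>t::real. x + t *\<^sub>R axis k (1::real)) \<longlongrightarrow> x) (nhds 0)"
    by simp
  then have "eventually (\<lambda>t. x + t *\<^sub>R axis k 1 \<in> U) (nhds 0)"
    using assms(1,2) topological_tendstoD by blast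
  then have "eventually (\<lambda>t. f (x + t *\<^sub>R axis k 1) = h (x + t *\<^sub>R axis k 1)) (nhds 0)"
    by eventually_elim (simp add: assms(3))
  then have "DERIV (\<lambda>t. f (x + t *\<^sub>R axis k 1)) 0 :> D \<longleftrightarrow> DERIV (\<lambda>t. h (x + t *\<^sub>R axis k 1)) 0 :> D"
    for D by (rule DERIV_cong_ev[OF refl _ refl])
  then show ?thesis
    unfolding pd_def deriv_def by simp
qed

section \<open>The g-orthogonal projector onto a nondegenerate subspace\<close>

lemma matrix_inv_left_right:
  fixes M :: "real^'n^'n"
  assumes "invertible M"
  shows matrix_inv_right: "M ** matrix_inv M = mat 1"
    and matrix_inv_left: "matrix_inv M ** M = mat 1"
proof -
  have "\<exists>M'. M ** M' = mat 1 \<and> M' ** M = mat 1"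
    using assms unfolding invertible_def by blast
  then have "M ** matrix_inv M = mat 1 \<and> matrix_inv M ** M = mat 1"
    unfolding matrix_inv_def by (rule someI_ex)
  then show "M ** matrix_inv M = mat 1" "matrix_inv M ** M = mat 1" by auto
qed

lemma gform_eq_inner: "gform g x X Y = X \<bullet> ((\<chi> a b. g x a b) *v Y)"
  by (simp add: gform_def inner_vec_def matrix_vector_mult_def sum_distrib_left mult.assoc)

lemma symmetric_matrix_inner_commute:
  fixes M :: "real^'n^'n"
  assumes "transpose M = M"
  shows "X \<bullet> (M *v Y) = Y \<bullet> (M *v X)"
  by (metis assms dot_lmul_matrix inner_commute vector_transpose_matrix)

lemma dim_matrix_orthogonal_complement:
  fixes M :: "real^'n^'n"
  assumes "invertible M" and "subspace S"
  shows "dim {Z. \<forall>Y\<in>S. Z \<bullet> (M *v Y) = 0} + dim S = CARD('n)"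
proof -
  have "subspace ((*v) M ` S)"
    using assms(2) by (rule linear_subspace_image[OF matrix_vector_mul_linear])
  then have "dim {Z \<in> UNIV. \<forall>Y\<in>(*v) M ` S. orthogonal Y Z} + dim ((*v) M ` S) = dim (UNIV :: (real^'n) set)"
    by (rule dim_subspace_orthogonal_to_vectors) auto
  moreover have "{Z \<in> UNIV. \<forall>Y\<in>(*v) M ` S. orthogonal Y Z} = {Z. \<forall>Y\<in>S. Z \<bullet> (M *v Y) = 0}"
    by (auto simp: orthogonal_def inner_commute)
  moreover have "dim ((*v) M ` S) = dim S"
    using inj_matrix_vector_mult[OF assms(1)]
    by (intro dim_image_eq matrix_vector_mul_linear) (auto intro: inj_on_subset)
  ultimately show ?thesis by simp
qed

lemma matrix_orthogonal_projection_exists: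
  fixes M :: "real^'n^'n"
  assumes "invertible M" and S: "subspace S"
    and nondeg: "\<forall>X\<in>S. (\<forall>Y\<in>S. X \<bullet> (M *v Y) = 0) \<longrightarrow> X = 0"
  shows "\<exists>P. \<forall>X. P *v X \<in> S \<and> (\<forall>Y\<in>S. (X - P *v X) \<bullet> (M *v Y) = 0)"
proof -
  define W where "W = {Z. \<forall>Y\<in>S. Z \<bullet> (M *v Y) = 0}"
  define SW where "SW = {X + Z |X Z. X \<in> S \<and> Z \<in> W}"
  have W: "subspace W"
    unfolding W_def subspace_def by (simp add: inner_add_left)
  have "S \<inter> W = {0}"
    using nondeg subspace_0[OF S] subspace_0[OF W] unfolding W_def by blast
  then have "dim SW = CARD('n)"
    using dim_sums_Int[OF S W] dim_matrix_orthogonal_complement[OF assms(1,2)]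
    unfolding SW_def W_def by simp
  then have "span SW = UNIV"
    using dim_eq_full[of SW] by (simp add: DIM_cart)
  moreover have "span SW = SW"
    using subspace_sums[OF S W] unfolding SW_def by simp
  ultimately have SW_UNIV: "SW = UNIV" by simp
  have "\<exists>Y. Y \<in> S \<and> X - Y \<in> W" for X
  proof -
    have "X \<in> SW" using SW_UNIV by simp
    then obtain Y Z where "X = Y + Z" "Y \<in> S" "Z \<in> W" unfolding SW_def by blast
    then show ?thesis by (intro exI[of _ Y]) simp
  qed
  then obtain pr where pr: "\<And>X. pr X \<in> S" "\<And>X. X - pr X \<in> W" by metis
  define P where "P = (\<chi> i j. pr (axis j 1) $ i)"
  have P: "P *v X = (\<Sum>j\<in>UNIV. X$j *\<^sub>R pr (axis j 1))" for X
    by (simp add: P_def matrix_vector_mult_def vec_eq_iff mult.commute)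
  have "X - P *v X = (\<Sum>j\<in>UNIV. X$j *\<^sub>R (axis j 1 - pr (axis j 1)))" for X
    using basis_expansion[of X]
    by (simp add: P scalar_mult_eq_scaleR scaleR_right_diff_distrib sum_subtractf)
  then have "X - P *v X \<in> W" for X
    by (simp add: subspace_sum[OF W] subspace_mul[OF W] pr)
  moreover have "P *v X \<in> S" for X
    unfolding P by (intro subspace_sum[OF S] subspace_mul[OF S] pr)
  ultimately show ?thesis unfolding W_def by blast
qed

context
  fixes g :: "'n::finite tensor2" and V :: "real^'n \<Rightarrow> (real^'n) set" and x :: "real^'n"
  assumes g_symmetric: "\<forall>i j. g x i j = g x j i"
    and g_det: "det (\<chi> a b. g x a b) \<noteq> 0"
    and V_subspace: "subspace (V x)"
    and V_nondegenerate: "\<forall>X\<in>V x. (\<forall>Y\<in>V x. gform g x X Y = 0) \<longrightarrow> X = 0"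
begin

lemma vmat_projection:
  "vmat g V x *v X \<in> V x" "\<forall>Y\<in>V x. (X - vmat g V x *v X) \<bullet> ((\<chi> a b. g x a b) *v Y) = 0"
proof -
  define M where "M = (\<chi> a b. g x a b)"
  have M: "invertible M"
    using g_det invertible_det_nz M_def by blast
  have nondeg: "\<forall>X\<in>V x. (\<forall>Y\<in>V x. X \<bullet> (M *v Y) = 0) \<longrightarrow> X = 0"
    using V_nondegenerate by (simp add: gform_eq_inner M_def)
  obtain P where P: "\<forall>X. P *v X \<in> V x \<and> (\<forall>Y\<in>V x. (X - P *v X) \<bullet> (M *v Y) = 0)"
    using matrix_orthogonal_projection_exists[OF M V_subspace nondeg] by blast
  have unique: "Q = P" if Q: "\<forall>X. Q *v X \<in> V x \<and> (\<forall>Y\<in>V x. (X - Q *v X) \<bullet> (M *v Y) = 0)" for Q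
  proof -
    have "Q *v X = P *v X" for X
    proof -
      have QP: "Q *v X - P *v X \<in> V x" using P Q subspace_diff[OF V_subspace] by blast
      have "\<forall>Y\<in>V x. (Q *v X - P *v X) \<bullet> (M *v Y) = 0"
      proof
        fix Y assume "Y \<in> V x"
        then have "(X - Q *v X) \<bullet> (M *v Y) = 0" "(X - P *v X) \<bullet> (M *v Y) = 0" using P Q by auto
        moreover have "Q *v X - P *v X = (X - P *v X) - (X - Q *v X)" by simp
        ultimately show "(Q *v X - P *v X) \<bullet> (M *v Y) = 0" by (simp add: inner_diff_left)
      qed
      then show ?thesis using nondeg QP by auto
    qed
    then show ?thesis by (simp add: matrix_eq)
  qed
  have "\<exists>!P. \<forall>X. P *v X \<in> V x \<and> (\<forall>Y\<in>V x. gform g x (X - P *v X) Y = 0)"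
    unfolding gform_eq_inner M_def[symmetric] using P unique by (intro ex1I[of _ P]) blast+
  then have "\<forall>X. vmat g V x *v X \<in> V x \<and> (\<forall>Y\<in>V x. gform g x (X - vmat g V x *v X) Y = 0)"
    unfolding vmat_def by (rule theI')
  then show "vmat g V x *v X \<in> V x" "\<forall>Y\<in>V x. (X - vmat g V x *v X) \<bullet> ((\<chi> a b. g x a b) *v Y) = 0"
    by (simp_all add: gform_eq_inner)
qed

lemma vmat_fixes_V:
  assumes "Y \<in> V x"
  shows "vmat g V x *v Y = Y"
proof -
  have "Y - vmat g V x *v Y \<in> V x"
    using assms vmat_projection(1) subspace_diff[OF V_subspace] by blast
  then show ?thesis
    using V_nondegenerate vmat_projection(2)[of Y] by (force simp: gform_eq_inner)
qed

lemma vmat_idempotent: "vmat g V x ** vmat g V x = vmat g V x"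
  by (simp add: matrix_eq matrix_vector_mul_assoc[symmetric] vmat_fixes_V vmat_projection(1))

lemma range_vmat: "range ((*v) (vmat g V x)) = V x"
  using vmat_projection(1) vmat_fixes_V by (auto simp: image_iff) metis

lemma vmat_self_adjoint:
  "transpose (vmat g V x) ** (\<chi> a b. g x a b) = (\<chi> a b. g x a b) ** vmat g V x"
proof -
  define M where "M = (\<chi> a b. g x a b)"
  define A where "A = vmat g V x"
  have M: "transpose M = M"
    using g_symmetric by (simp add: M_def transpose_def vec_eq_iff)
  have A: "(X - A *v X) \<bullet> (M *v (A *v Y)) = 0" for X Y
    using vmat_projection unfolding A_def M_def by blast
  have A_adjoint: "(A *v X) \<bullet> (M *v Y) = X \<bullet> (M *v (A *v Y))" for X Y
    using A[of Y X] A[of X Y] symmetric_matrix_inner_commute[OF M, of "A *v X" "Y - A *v Y"]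
    by (simp add: matrix_vector_mult_diff_distrib inner_diff_left inner_diff_right)
  then have "X \<bullet> ((transpose A ** M) *v Y) = X \<bullet> ((M ** A) *v Y)" for X Y
  proof -
    have "X \<bullet> ((transpose A ** M) *v Y) = (X v* transpose A) \<bullet> (M *v Y)"
      by (simp only: matrix_vector_mul_assoc[symmetric] dot_lmul_matrix)
    also have "\<dots> = X \<bullet> ((M ** A) *v Y)"
      using A_adjoint by (simp add: matrix_vector_mul_assoc)
    finally show ?thesis .
  qed
  then have "(transpose A ** M) *v Y = (M ** A) *v Y" for Y
    using vector_eq_ldot by blast
  then show ?thesis
    unfolding A_def[symmetric] M_def[symmetric] by (simp add: matrix_eq)
qed

end

section \<open>Trace of an idempotent matrix\<close>

lemma idempotent_range_kernel_dim:
  fixes A :: "real^'n^'n"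
  assumes "A ** A = A"
  shows "dim (range ((*v) A)) + dim {X. A *v X = 0} = CARD('n)"
proof -
  define R where "R = range ((*v) A)"
  define K where "K = {X. A *v X = 0}"
  have R: "subspace R"
    unfolding R_def by (rule linear_subspace_image[OF matrix_vector_mul_linear subspace_UNIV])
  have K: "subspace K"
    unfolding K_def subspace_def by (simp add: matrix_vector_right_distrib matrix_vector_mult_scaleR)
  have "A *v X = X" if "X \<in> R" for X
    using that assms unfolding R_def by (auto simp: matrix_vector_mul_assoc)
  then have "R \<inter> K = {0}"
    using subspace_0[OF R] subspace_0[OF K] unfolding K_def by auto
  moreover have "{X + Z |X Z. X \<in> R \<and> Z \<in> K} = UNIV"
  proof -
    have "X = A *v X + (X - A *v X)" "A *v X \<in> R" "X - A *v X \<in> K" for X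
      using assms unfolding R_def K_def
      by (auto simp: matrix_vector_mult_diff_distrib matrix_vector_mul_assoc)
    then show ?thesis by blast
  qed
  ultimately show ?thesis
    using dim_sums_Int[OF R K] unfolding R_def K_def by simp
qed

lemma idempotent_range_kernel_basis:
  fixes A :: "real^'n^'n"
  assumes "A ** A = A"
  obtains B1 B2 where "\<And>X. X \<in> B1 \<Longrightarrow> A *v X = X" "\<And>X. X \<in> B2 \<Longrightarrow> A *v X = 0"
    "card B1 = dim (range ((*v) A))" "independent (B1 \<union> B2)" "card (B1 \<union> B2) = CARD('n)"
proof -
  obtain B1 where B1: "B1 \<subseteq> range ((*v) A)" "independent B1"
      "range ((*v) A) \<subseteq> span B1" "card B1 = dim (range ((*v) A))"
    using basis_exists by blast
  obtain B2 where B2: "B2 \<subseteq> {X. A *v X = 0}" "independent B2"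
      "{X. A *v X = 0} \<subseteq> span B2" "card B2 = dim {X. A *v X = 0}"
    using basis_exists by blast
  have fin: "finite B1" "finite B2"
    using B1(2) B2(2) independent_explicit by blast+
  have fix_B1: "A *v X = X" if "X \<in> B1" for X
    using that B1(1) assms by (auto simp: matrix_vector_mul_assoc)
  have "X = 0" if "X \<in> B1" "X \<in> B2" for X
    using fix_B1[OF that(1)] that(2) B2(1) by auto
  moreover have "0 \<notin> B1"
    using B1(2) dependent_zero by blast
  ultimately have "B1 \<inter> B2 = {}" by blast
  then have card: "card (B1 \<union> B2) = CARD('n)"
    using card_Un_disjoint[OF fin] B1(4) B2(4) idempotent_range_kernel_dim[OF assms] by simp
  have "UNIV \<subseteq> span (B1 \<union> B2)"
  proof
    fix X :: "real^'n"
    have "A *v X \<in> span (B1 \<union> B2)"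
      using B1(3) span_mono[of B1 "B1 \<union> B2"] by blast
    moreover have "A *v (X - A *v X) = 0"
      using assms by (simp add: matrix_vector_mult_diff_distrib matrix_vector_mul_assoc)
    then have "X - A *v X \<in> span (B1 \<union> B2)"
      using B2(3) span_mono[of B2 "B1 \<union> B2"] by blast
    ultimately have "A *v X + (X - A *v X) \<in> span (B1 \<union> B2)" by (rule span_add)
    then show "X \<in> span (B1 \<union> B2)" by simp
  qed
  then have "independent (B1 \<union> B2)"
    using card_eq_dim[of "B1 \<union> B2" UNIV] fin card by simp
  then show thesis
    using that fix_B1 B2(1) B1(4) card by blast
qed

lemma bij_betw_independent_combination_eq_0:
  fixes f :: "'i::finite \<Rightarrow> real^'n"
  assumes f: "bij_betw f UNIV B" and "independent B" and "(\<Sum>i\<in>UNIV. u i *\<^sub>R f i) = 0"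
  shows "u = (\<lambda>_. 0)"
proof -
  have "(\<Sum>v\<in>B. u (inv_into UNIV f v) *\<^sub>R v) = (\<Sum>i\<in>UNIV. u i *\<^sub>R f i)"
    using sum.reindex_bij_betw[OF f, of "\<lambda>v. u (inv_into UNIV f v) *\<^sub>R v"] f
    by (simp add: bij_betw_inv_into_left)
  then have "\<forall>v\<in>B. u (inv_into UNIV f v) = 0"
    using assms(2,3) unfolding independent_explicit by metis
  moreover have "inv_into UNIV f (f i) = i" for i
    using f by (simp add: bij_betw_inv_into_left)
  ultimately show ?thesis
    using f bij_betwE by fastforce
qed

lemma idempotent_adapted_basis:
  fixes A :: "real^'n^'n"
  assumes "A ** A = A"
  obtains P :: "real^'n^'n" and I :: "'n set"
  where "invertible P" and "card I = dim (range ((*v) A))"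
    and "\<And>i. A *v column i P = (if i \<in> I then column i P else 0)"
proof -
  obtain B1 B2 where B1: "\<And>X. X \<in> B1 \<Longrightarrow> A *v X = X" and B2: "\<And>X. X \<in> B2 \<Longrightarrow> A *v X = 0"
    and card_B1: "card B1 = dim (range ((*v) A))"
    and indep: "independent (B1 \<union> B2)" and card: "card (B1 \<union> B2) = CARD('n)"
    using idempotent_range_kernel_basis[OF assms] by blast
  have "finite (B1 \<union> B2)"
    using indep independent_explicit by blast
  then obtain f where f: "bij_betw f (UNIV::'n set) (B1 \<union> B2)"
    using finite_same_card_bij[of "UNIV::'n set" "B1 \<union> B2"] card by auto
  define P where "P = (\<chi> r i. f i $ r)"
  have column_P: "column i P = f i" for i
    by (simp add: column_def P_def vec_eq_iff)
  have "\<exists>Q. Q ** P = mat 1"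
    unfolding matrix_left_invertible_independent_columns scalar_mult_eq_scaleR column_P
    using bij_betw_independent_combination_eq_0[OF f indep] by (metis (mono_tags))
  then have "invertible P"
    using matrix_left_right_inverse unfolding invertible_def by blast
  moreover have "bij_betw f {i. f i \<in> B1} B1"
    using f unfolding bij_betw_def inj_on_def by (auto simp: image_iff)
  then have "card {i. f i \<in> B1} = dim (range ((*v) A))"
    using card_B1 bij_betw_same_card by fastforce
  moreover have "A *v column i P = (if i \<in> {i. f i \<in> B1} then column i P else 0)" for i
    unfolding column_P using f B1 B2 bij_betwE by fastforce
  ultimately show thesis
    using that by blast
qed

lemma trace_idempotent:
  fixes A :: "real^'n^'n"
  assumes "A ** A = A"
  shows "trace A = real (dim (range ((*v) A)))"
proof -
  obtain P :: "real^'n^'n" and I where P: "invertible P"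
    and card_I: "card I = dim (range ((*v) A))"
    and A_P: "\<And>i. A *v column i P = (if i \<in> I then column i P else 0)"
    by (rule idempotent_adapted_basis[OF assms], rule that)
  define Q where "Q = matrix_inv P"
  have "trace A = trace ((A ** P) ** Q)"
    by (simp add: matrix_mul_assoc[symmetric] Q_def matrix_inv_right[OF P])
  also have "\<dots> = trace (Q ** (A ** P))"
    by (rule trace_mul_sym)
  also have "(Q ** (A ** P)) $ i $ i = (if i \<in> I then 1 else 0)" for i
  proof -
    have "Q *v column i P = axis i 1"
      by (simp add: Q_def matrix_inv_left[OF P] matrix_vector_mul_assoc flip: matrix_vector_mult_basis)
    moreover have "column i (Q ** (A ** P)) = Q *v (A *v column i P)"
      by (simp add: matrix_vector_mul_assoc flip: matrix_vector_mult_basis)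
    ultimately have "column i (Q ** (A ** P)) = (if i \<in> I then axis i 1 else 0)"
      by (simp add: A_P)
    then show ?thesis
      by (simp add: column_def vec_eq_iff)
  qed
  then have "trace (Q ** (A ** P)) = real (card I)"
    by (simp add: trace_def sum.If_cases)
  finally show ?thesis using card_I by simp
qed

definition trilinear :: "('n::finite \<Rightarrow> 'n \<Rightarrow> 'n \<Rightarrow> real) \<Rightarrow> real^'n \<Rightarrow> real^'n \<Rightarrow> real^'n \<Rightarrow> real"
  where "trilinear F X Y Z = (\<Sum>a\<in>UNIV. \<Sum>b\<in>UNIV. \<Sum>c\<in>UNIV. X$a * Y$b * Z$c * F a b c)"

lemma trilinear_swap12: "trilinear (\<lambda>a b c. F b a c) X Y Z = trilinear F Y X Z"
  unfolding trilinear_def by (subst sum.swap) (simp add: mult_ac)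

lemma trilinear_swap23: "trilinear (\<lambda>a b c. F a c b) X Y Z = trilinear F X Z Y"
  unfolding trilinear_def by (rule sum.cong[OF refl], subst sum.swap) (simp add: mult_ac)

lemma trilinear_add:
  "trilinear (\<lambda>a b c. F a b c + F' a b c) X Y Z = trilinear F X Y Z + trilinear F' X Y Z"
  unfolding trilinear_def by (simp add: distrib_left sum.distrib)

lemma trilinear_divide: "trilinear (\<lambda>a b c. F a b c / r) X Y Z = trilinear F X Y Z / r"
  unfolding trilinear_def by (simp add: sum_divide_distrib)

lemma trilinear_sym3:
  "trilinear (sym3 F) X Y Z =
    (trilinear F X Y Z + trilinear F X Z Y + trilinear F Y X Z
      + trilinear F Y Z X + trilinear F Z X Y + trilinear F Z Y X) / 6"
proof -
  have cycle: "trilinear (\<lambda>a b c. F b c a) X Y Z = trilinear F Y Z X" for X Y Z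
    using trilinear_swap12[of "\<lambda>a b c. F a c b" X Y Z] trilinear_swap23[of F Y X Z] by simp
  have cycle2: "trilinear (\<lambda>a b c. F c a b) X Y Z = trilinear F Z X Y" for X Y Z
    using trilinear_swap23[of "\<lambda>a b c. F b a c" X Y Z] trilinear_swap12[of F X Z Y] by simp
  have reverse: "trilinear (\<lambda>a b c. F c b a) X Y Z = trilinear F Z Y X"
    using trilinear_swap12[of "\<lambda>a b c. F c a b" X Y Z] cycle2[of Y X Z] by simp
  have sym3_F: "sym3 F = (\<lambda>a b c. (F a b c + F a c b + F b a c + F b c a + F c a b + F c b a) / 6)"
    unfolding sym3_def by (intro ext) simp
  show ?thesis
    unfolding sym3_F trilinear_divide trilinear_add
    using trilinear_swap12[of F X Y Z] trilinear_swap23[of F X Y Z] cycle[of X Y Z] cycle2[of X Y Z]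
      reverse by simp
qed

lemma sym3_scale: "sym3 (\<lambda>a b c. k * F a b c) a b c = k * sym3 F a b c"
  unfolding sym3_def by (simp add: algebra_simps)

lemma sum_axis_left: "(\<Sum>i\<in>UNIV. axis a (1::real) $ i * f i) = f a"
proof -
  have "(\<Sum>i\<in>UNIV. axis a (1::real) $ i * f i) = (\<Sum>i\<in>UNIV. if i = a then f a else 0)"
    by (rule sum.cong) (auto simp: axis_def)
  then show ?thesis by simp
qed

lemma sum_axis_right: "(\<Sum>i\<in>UNIV. f i * axis a (1::real) $ i) = f a"
  using sum_axis_left[of a f] by (simp add: mult.commute)

lemma trilinear_axis: "trilinear F (axis a 1) (axis b 1) (axis c 1) = F a b c"
proof -
  have "trilinear F (axis a 1) (axis b 1) (axis c 1) =
      (\<Sum>a'\<in>UNIV. axis a 1 $ a' * (\<Sum>b'\<in>UNIV. axis b 1 $ b' * (\<Sum>c'\<in>UNIV. axis c 1 $ c' * F a' b' c')))"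
    unfolding trilinear_def by (simp add: sum_distrib_left mult.assoc)
  also have "\<dots> = F a b c" by (simp only: sum_axis_left)
  finally show ?thesis .
qed

section \<open>The covariant derivative of a projector\<close>

lemma matrix_vector_mult_sum:
  "(M::real^'n::finite^'m::finite) *v (\<Sum>j\<in>S. f j) = (\<Sum>j\<in>S. M *v f j)"
  using linear_sum[OF matrix_vector_mul_linear[of M], of f S] by (simp add: o_def)

(* G, P and N k stand for g, v and nabla_k v at a point, as matrices acting on vectors. *)
locale projector_derivative =
  fixes G P :: "real^'n::finite^'n" and N :: "'n \<Rightarrow> real^'n^'n"
  assumes G_symmetric: "transpose G = G"
    and G_invertible: "invertible G"
    and P_idempotent: "\<And>Y. P *v (P *v Y) = P *v Y"
    and P_self_adjoint: "\<And>X Y. (P *v X) \<bullet> (G *v Y) = X \<bullet> (G *v (P *v Y))"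
    and N_projector: "\<And>k Y. N k *v (P *v Y) + P *v (N k *v Y) = N k *v Y"
    and N_self_adjoint: "\<And>k Y Z. (N k *v Y) \<bullet> (G *v Z) = (N k *v Z) \<bullet> (G *v Y)"
begin

definition "gprod X Y = X \<bullet> (G *v Y)"
definition "H = mat 1 - P"
definition "Nv X Y = (\<Sum>c\<in>UNIV. X$c *\<^sub>R (N c *v Y))"
(* dv X Y Z is (nabla_X v)(Y, Z), and QV X Y, QH X Y are Q_v(X, Y) and -Q_h(X, Y). *)
definition "dv X Y Z = gprod (Nv X Y) Z"
definition "QV X Y = Nv (P *v X) (P *v Y)"
definition "QH X Y = Nv (H *v X) (H *v Y)"

lemma gprod_commute: "gprod X Y = gprod Y X"
  unfolding gprod_def by (rule symmetric_matrix_inner_commute[OF G_symmetric])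

lemma gprod_add_left: "gprod (X + Y) Z = gprod X Z + gprod Y Z"
  unfolding gprod_def by (simp add: inner_add_left)

lemma gprod_add_right: "gprod Z (X + Y) = gprod Z X + gprod Z Y"
  unfolding gprod_def by (simp add: inner_add_right matrix_vector_right_distrib)

lemma gprod_scaleR_left: "gprod (c *\<^sub>R X) Z = c * gprod X Z"
  unfolding gprod_def by simp

lemma gprod_scaleR_right: "gprod Z (c *\<^sub>R X) = c * gprod Z X"
  unfolding gprod_def by (simp add: matrix_vector_mult_scaleR)

lemma gprod_sum_left: "gprod (\<Sum>j\<in>S. f j) Z = (\<Sum>j\<in>S. gprod (f j) Z)"
  unfolding gprod_def by (simp add: inner_sum_left)

lemma gprod_sum_right: "gprod Z (\<Sum>j\<in>S. f j) = (\<Sum>j\<in>S. gprod Z (f j))"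
  unfolding gprod_def by (simp add: matrix_vector_mult_sum inner_sum_right)

lemma gprod_nondegenerate:
  assumes "\<And>Z. gprod W Z = 0"
  shows "W = 0"
proof -
  have "gprod W (matrix_inv G *v W) = 0" by (rule assms)
  then have "W \<bullet> W = 0"
    unfolding gprod_def by (simp add: matrix_vector_mul_assoc matrix_inv_right[OF G_invertible])
  then show ?thesis by simp
qed

lemma gprod_P: "gprod (P *v X) Y = gprod X (P *v Y)"
  unfolding gprod_def by (rule P_self_adjoint)

lemma H_apply: "H *v Y = Y - P *v Y"
  unfolding H_def by (simp add: matrix_vector_mult_diff_rdistrib)

lemma P_plus_H: "P *v Y + H *v Y = Y"
  unfolding H_apply by simp

lemma complement: "projector_derivative G H N"
proof
  show "H *v (H *v Y) = H *v Y" for Y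
    unfolding H_apply by (simp add: matrix_vector_mult_diff_distrib P_idempotent)
  show "(H *v X) \<bullet> (G *v Y) = X \<bullet> (G *v (H *v Y))" for X Y
    using gprod_P[of X Y] unfolding H_apply gprod_def
    by (simp add: inner_diff_left inner_diff_right matrix_vector_mult_diff_distrib)
  show "N k *v (H *v Y) + H *v (N k *v Y) = N k *v Y" for k Y
    using N_projector[of k Y] unfolding H_apply
    by (simp add: matrix_vector_mult_diff_distrib algebra_simps)
qed (use G_symmetric G_invertible N_self_adjoint in auto)

lemma QV_complement: "projector_derivative.QV H N = QH"
  unfolding projector_derivative.QV_def[OF complement] QH_def by (intro ext) simp

lemma Nv_add_left: "Nv (X + X') Y = Nv X Y + Nv X' Y"
  unfolding Nv_def by (simp add: scaleR_add_left sum.distrib)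

lemma Nv_add_right: "Nv X (Y + Y') = Nv X Y + Nv X Y'"
  unfolding Nv_def by (simp add: matrix_vector_right_distrib scaleR_add_right sum.distrib)

lemma Nv_projector: "Nv X (P *v Y) + P *v (Nv X Y) = Nv X Y"
proof -
  have "Nv X (P *v Y) + P *v (Nv X Y) = (\<Sum>c\<in>UNIV. X$c *\<^sub>R (N c *v (P *v Y) + P *v (N c *v Y)))"
    unfolding Nv_def
    by (simp add: matrix_vector_mult_sum matrix_vector_mult_scaleR scaleR_add_right sum.distrib)
  then show ?thesis unfolding Nv_def N_projector .
qed

lemma Nv_P_into_H: "P *v Nv X (P *v Y) = 0"
proof -
  have "P *v Nv X (P *v Y) + P *v (P *v Nv X Y) = P *v Nv X Y"
    using Nv_projector[of X Y] by (metis matrix_vector_right_distrib)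
  then show ?thesis by (simp add: P_idempotent)
qed

lemma dv_commute: "dv X Y Z = dv X Z Y"
  unfolding dv_def Nv_def gprod_sum_left gprod_scaleR_left
  using N_self_adjoint unfolding gprod_def by simp

lemma dv_PP: "dv X (P *v Y) (P *v Z) = 0"
proof -
  have "dv X (P *v Y) (P *v Z) = gprod (P *v Nv X (P *v Y)) Z"
    unfolding dv_def gprod_P ..
  then show ?thesis by (simp add: Nv_P_into_H gprod_def)
qed

lemma dv_HH: "dv X (H *v Y) (H *v Z) = 0"
  using projector_derivative.dv_PP[OF complement] by simp

lemma Nv_decompose_left: "Nv X Y = Nv (P *v X) Y + Nv (H *v X) Y"
  using P_plus_H[of X] Nv_add_left by metis

lemma dv_PH: "dv X (P *v Y) (H *v Z) = gprod (QV X Y) (H *v Z) + gprod (QH X Z) (P *v Y)"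
proof -
  have "dv X (P *v Y) (H *v Z) = gprod (QV X Y) (H *v Z) + dv (H *v X) (P *v Y) (H *v Z)"
    unfolding dv_def QV_def
    by (subst Nv_decompose_left) (simp add: gprod_add_left P_idempotent)
  also have "dv (H *v X) (P *v Y) (H *v Z) = dv (H *v X) (H *v Z) (P *v Y)"
    by (rule dv_commute)
  also have "\<dots> = gprod (QH X Z) (P *v Y)"
    unfolding dv_def QH_def ..
  finally show ?thesis .
qed

lemma dv_split:
  "dv X Y Z = gprod (QV X Y) (H *v Z) + gprod (QH X Z) (P *v Y)
    + gprod (QV X Z) (H *v Y) + gprod (QH X Y) (P *v Z)"
proof -
  have Y: "Y = P *v Y + H *v Y" and Z: "Z = P *v Z + H *v Z"
    by (simp_all add: P_plus_H)
  have "dv X Y Z = dv X (P *v Y) (P *v Z) + dv X (P *v Y) (H *v Z)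
      + dv X (H *v Y) (P *v Z) + dv X (H *v Y) (H *v Z)"
    unfolding dv_def by (subst Y, subst Z) (simp add: Nv_add_right gprod_add_left gprod_add_right)
  then have "dv X Y Z = dv X (P *v Y) (H *v Z) + dv X (H *v Y) (P *v Z)"
    by (simp add: dv_PP dv_HH)
  then show ?thesis
    unfolding dv_commute[of X "H *v Y"] dv_PH by simp
qed

lemma cyclic_dv_eq_0:
  assumes "QV X Y + QV Y X = 0" "QV Y Z + QV Z Y = 0" "QV Z X + QV X Z = 0"
    and "QH X Y + QH Y X = 0" "QH Y Z + QH Z Y = 0" "QH Z X + QH X Z = 0"
  shows "dv X Y Z + dv Y Z X + dv Z X Y = 0"
proof -
  have sum_eq_0: "gprod A W + gprod B W = 0" if "A + B = 0" for A B W
    using that gprod_add_left[of A B W] by (simp add: gprod_def)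
  show ?thesis
    unfolding dv_split[of X Y Z] dv_split[of Y Z X] dv_split[of Z X Y]
    using sum_eq_0[OF assms(1), of "H *v Z"] sum_eq_0[OF assms(2), of "H *v X"]
      sum_eq_0[OF assms(3), of "H *v Y"] sum_eq_0[OF assms(4), of "P *v Z"]
      sum_eq_0[OF assms(5), of "P *v X"] sum_eq_0[OF assms(6), of "P *v Y"]
    by linarith
qed

lemma QV_add_diagonal: "QV (X + Y) (X + Y) = QV X X + QV X Y + QV Y X + QV Y Y"
  unfolding QV_def by (simp add: matrix_vector_right_distrib Nv_add_left Nv_add_right)

lemma QV_diagonal_eq_0:
  assumes cyclic: "\<And>X Y Z. dv X Y Z + dv Y Z X + dv Z X Y = 0"
  shows "QV X X = 0"
proof (rule gprod_nondegenerate)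
  fix Z
  have "dv (P *v X) (P *v X) (H *v Z) + dv (P *v X) (H *v Z) (P *v X) + dv (H *v Z) (P *v X) (P *v X) = 0"
    by (rule cyclic)
  moreover have "dv (P *v X) (H *v Z) (P *v X) = dv (P *v X) (P *v X) (H *v Z)"
    by (rule dv_commute)
  moreover have "dv (H *v Z) (P *v X) (P *v X) = 0"
    by (rule dv_PP)
  moreover have "dv (P *v X) (P *v X) (H *v Z) = gprod (QV X X) (H *v Z)"
    unfolding dv_def QV_def ..
  ultimately have "gprod (QV X X) (H *v Z) = 0" by simp
  moreover have "gprod (QV X X) (P *v Z) = 0"
    unfolding QV_def gprod_P[symmetric] using Nv_P_into_H by (simp add: gprod_def)
  ultimately show "gprod (QV X X) Z = 0"
    using gprod_add_right[of "QV X X" "P *v Z" "H *v Z"] by (simp add: P_plus_H)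
qed

lemma QV_antisymmetric:
  assumes "\<And>X Y Z. dv X Y Z + dv Y Z X + dv Z X Y = 0"
  shows "QV X Y + QV Y X = 0"
proof -
  have "QV X X = 0" "QV Y Y = 0" "QV (X + Y) (X + Y) = 0"
    using QV_diagonal_eq_0[OF assms] by blast+
  then show ?thesis
    using QV_add_diagonal[of X Y] by (simp add: add.assoc)
qed

lemma QH_antisymmetric:
  assumes "\<And>X Y Z. dv X Y Z + dv Y Z X + dv Z X Y = 0"
  shows "QH X Y + QH Y X = 0"
  using projector_derivative.QV_antisymmetric[OF complement assms] unfolding QV_complement .

definition "dv_component a b c = dv (axis a 1) (axis b 1) (axis c 1)"

lemma Nv_axis: "Nv (axis a 1) Y = N a *v Y"
proof -
  have "Nv (axis a 1) Y = (\<Sum>c\<in>UNIV. if c = a then N a *v Y else 0)"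
    unfolding Nv_def by (rule sum.cong) (auto simp: axis_def)
  then show ?thesis by simp
qed

lemma dv_component_eq: "dv_component a b c = gprod (N a *v axis b 1) (axis c 1)"
  unfolding dv_component_def dv_def Nv_axis ..

lemma dv_trilinear: "dv X Y Z = trilinear dv_component X Y Z"
proof -
  have expand: "V = (\<Sum>j\<in>UNIV. V$j *\<^sub>R axis j 1)" for V :: "real^'n"
    using basis_expansion[of V] by (simp add: scalar_mult_eq_scaleR)
  have component: "gprod (N a *v Y) Z = (\<Sum>b\<in>UNIV. \<Sum>c\<in>UNIV. Y$b * Z$c * dv_component a b c)" for a
  proof -
    have "gprod (N a *v Y) Z
        = gprod (\<Sum>b\<in>UNIV. Y$b *\<^sub>R (N a *v axis b 1)) (\<Sum>c\<in>UNIV. Z$c *\<^sub>R axis c 1)"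
      by (subst expand[of Y], subst expand[of Z]) (simp add: matrix_vector_mult_sum matrix_vector_mult_scaleR)
    then show ?thesis
      by (simp add: gprod_sum_left gprod_sum_right gprod_scaleR_left gprod_scaleR_right
          dv_component_eq sum_distrib_left mult_ac)
        (rule sum.swap)
  qed
  have "dv X Y Z = (\<Sum>a\<in>UNIV. X$a * gprod (N a *v Y) Z)"
    unfolding dv_def Nv_def gprod_sum_left gprod_scaleR_left ..
  also have "\<dots> = (\<Sum>a\<in>UNIV. X$a * (\<Sum>b\<in>UNIV. \<Sum>c\<in>UNIV. Y$b * Z$c * dv_component a b c))"
    unfolding component ..
  finally show ?thesis
    unfolding trilinear_def by (simp add: sum_distrib_left mult_ac)
qed

lemma trilinear_sym3_dv_component:
  "trilinear (sym3 dv_component) X Y Z = (dv X Y Z + dv Y Z X + dv Z X Y) / 3"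
  unfolding trilinear_sym3 dv_trilinear[symmetric]
  using dv_commute[of X Z Y] dv_commute[of Y X Z] dv_commute[of Z Y X] by simp

lemma sym3_dv_component_eq_0_iff:
  "(\<forall>a b c. sym3 dv_component a b c = 0) \<longleftrightarrow>
    (\<forall>a b. QV (axis a 1) (axis b 1) + QV (axis b 1) (axis a 1) = 0 \<and>
           QH (axis a 1) (axis b 1) + QH (axis b 1) (axis a 1) = 0)"
proof
  assume "\<forall>a b c. sym3 dv_component a b c = 0"
  then have "dv X Y Z + dv Y Z X + dv Z X Y = 0" for X Y Z
    using trilinear_sym3_dv_component[of X Y Z] by (simp add: trilinear_def)
  then show "\<forall>a b. QV (axis a 1) (axis b 1) + QV (axis b 1) (axis a 1) = 0 \<and>
      QH (axis a 1) (axis b 1) + QH (axis b 1) (axis a 1) = 0"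
    using QV_antisymmetric QH_antisymmetric by blast
next
  assume "\<forall>a b. QV (axis a 1) (axis b 1) + QV (axis b 1) (axis a 1) = 0 \<and>
      QH (axis a 1) (axis b 1) + QH (axis b 1) (axis a 1) = 0"
  then show "\<forall>a b c. sym3 dv_component a b c = 0"
    using cyclic_dv_eq_0 trilinear_sym3_dv_component trilinear_axis by (metis divide_eq_0_iff)
qed

lemma trilinear_metric: "trilinear (\<lambda>a b c. G$a$b * s c) X Y Z = gprod X Y * (Z \<bullet> (\<chi> c. s c))"
  unfolding trilinear_def gprod_def inner_vec_def matrix_vector_mult_def
  by (simp add: sum_distrib_left sum_distrib_right mult_ac)

lemma cyclic_metric_form_vanishes_on_P:
  assumes cyclic: "\<And>X Y Z. dv X Y Z + dv Y Z X + dv Z X Y =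
      gprod X Y * (Z \<bullet> t) + gprod Y Z * (X \<bullet> t) + gprod Z X * (Y \<bullet> t)"
  shows "(P *v W) \<bullet> t = 0"
proof (rule ccontr)
  assume nonzero: "(P *v W) \<bullet> t \<noteq> 0"
  have restricted: "gprod (P *v X) (P *v Y) * ((P *v Z) \<bullet> t) + gprod (P *v Y) (P *v Z) * ((P *v X) \<bullet> t)
      + gprod (P *v Z) (P *v X) * ((P *v Y) \<bullet> t) = 0" for X Y Z
    using cyclic[of "P *v X" "P *v Y" "P *v Z"] by (simp add: dv_PP)
  have "3 * (gprod (P *v W) (P *v W) * ((P *v W) \<bullet> t)) = 0"
    using restricted[of W W W] by auto
  then have isotropic: "gprod (P *v W) (P *v W) = 0"
    using nonzero by simp
  have "gprod (P *v X) (P *v W) = 0" for X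
  proof -
    have "2 * (gprod (P *v X) (P *v W) * ((P *v W) \<bullet> t)) = 0"
      using restricted[of X W W] isotropic gprod_commute[of "P *v W" "P *v X"] by auto
    then show ?thesis using nonzero by simp
  qed
  then have "gprod (P *v W) Z = 0" for Z
    using gprod_commute gprod_P P_idempotent by metis
  then have "P *v W = 0" by (rule gprod_nondegenerate)
  then show False using nonzero by simp
qed

lemma sym3_dv_component_eq_metric_form:
  assumes "\<forall>a b c. sym3 dv_component a b c = sym3 (\<lambda>a b c. G$a$b * s c) a b c"
  shows "\<forall>a b c. sym3 dv_component a b c = 0"
proof -
  define t :: "real^'n" where "t = (\<chi> c. s c)"
  have "sym3 dv_component = sym3 (\<lambda>a b c. G$a$b * s c)"
    using assms by (intro ext) simp
  then have sym3_eq: "(dv X Y Z + dv Y Z X + dv Z X Y) / 3 = trilinear (sym3 (\<lambda>a b c. G$a$b * s c)) X Y Z"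
    for X Y Z unfolding trilinear_sym3_dv_component[symmetric] by simp
  have cyclic: "dv X Y Z + dv Y Z X + dv Z X Y =
      gprod X Y * (Z \<bullet> t) + gprod Y Z * (X \<bullet> t) + gprod Z X * (Y \<bullet> t)" for X Y Z
    using sym3_eq[of X Y Z] unfolding trilinear_sym3 trilinear_metric t_def[symmetric]
    using gprod_commute[of X Z] gprod_commute[of Y X] gprod_commute[of Z Y] by (simp add: algebra_simps)
  have "W \<bullet> t = 0" for W
    using cyclic_metric_form_vanishes_on_P[OF cyclic, of W]
      projector_derivative.cyclic_metric_form_vanishes_on_P[OF complement cyclic, of W]
      P_plus_H[of W] by (metis add_0 inner_add_left)
  then have "t = 0" by (metis inner_eq_zero_iff)
  then have "s c = 0" for c
    unfolding t_def by (metis vec_lambda_beta zero_index)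
  then show ?thesis
    using assms by (simp add: sym3_def)
qed

end

section \<open>The projector v at a point of the manifold\<close>

lemma sum_mat1_left: "(\<Sum>d\<in>UNIV. (mat 1 :: real^'n::finite^'n) $ c $ d * f d) = f c"
proof -
  have "(\<Sum>d\<in>UNIV. (mat 1 :: real^'n^'n) $ c $ d * f d) = (\<Sum>d\<in>UNIV. if d = c then f c else 0)"
    by (rule sum.cong) (auto simp: mat_def)
  then show ?thesis by simp
qed

lemma sum_mat1_right: "(\<Sum>d\<in>UNIV. f d * (mat 1 :: real^'n::finite^'n) $ c $ d) = f c"
  using sum_mat1_left[of c f] by (simp add: mult.commute)

lemma matrix_vector_mult_axis_nth: "((M::real^'n::finite^'m::finite) *v axis b 1) $ d = M $ d $ b"
  by (simp add: matrix_vector_mult_basis column_def)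

lemma vcov_eq_sum: "vcov g V y b c = (\<Sum>i\<in>UNIV. vmat g V y $ i $ b * g y i c)"
proof -
  have "vcov g V y b c = (\<Sum>i\<in>UNIV. \<Sum>j\<in>UNIV. (vmat g V y *v axis b 1) $ i * g y i j * axis c 1 $ j)"
    unfolding vcov_def gform_def ..
  also have "\<dots> = (\<Sum>i\<in>UNIV. (vmat g V y *v axis b 1) $ i * g y i c)"
    by (simp only: sum_axis_right)
  finally show ?thesis
    by (simp add: matrix_vector_mult_axis_nth)
qed

lemma hcov_eq: "hcov g V y b c = g y b c - vcov g V y b c"
proof -
  have "hcov g V y b c = gform g y (axis b 1 - vmat g V y *v axis b 1) (axis c 1)"
    unfolding hcov_def hmat_def by (simp add: matrix_vector_mult_diff_rdistrib)
  also have "\<dots> = gform g y (axis b 1) (axis c 1) - vcov g V y b c"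
    unfolding vcov_def gform_def by (simp add: left_diff_distrib sum_subtractf)
  also have "gform g y (axis b 1) (axis c 1) = g y b c"
    unfolding gform_def by (simp only: sum_axis_right sum_axis_left)
  finally show ?thesis .
qed

locale almost_product_point =
  fixes U :: "(real^'n::finite) set" and g :: "'n tensor2"
    and V :: "real^'n \<Rightarrow> (real^'n) set" and p :: nat and x :: "real^'n"
  assumes pseudo_riemannian: "pseudo_riemannian_on U g"
    and almost_product: "almost_product_on U g V p"
    and x_in_U: "x \<in> U"
begin

definition "G = (\<chi> i j. g x i j)"
definition "P = vmat g V x"
definition "dg k i j = pd (\<lambda>y. g y i j) k x"
definition "dP k = (\<chi> i j. pd (\<lambda>y. vmat g V y $ i $ j) k x)"
definition "Chr k = (\<chi> i j. christ g x i k j)"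
(* N k is the matrix of the endomorphism nabla_k v. *)
definition "N k = dP k + (Chr k ** P - P ** Chr k)"

lemma open_U: "open U"
  using pseudo_riemannian unfolding pseudo_riemannian_on_def by blast

lemma g_symmetric: "y \<in> U \<Longrightarrow> g y i j = g y j i"
  using pseudo_riemannian unfolding pseudo_riemannian_on_def by blast

lemma vmat_hypotheses:
  assumes "y \<in> U"
  shows "\<forall>i j. g y i j = g y j i" "det (\<chi> a b. g y a b) \<noteq> 0" "subspace (V y)"
    "\<forall>X\<in>V y. (\<forall>Y\<in>V y. gform g y X Y = 0) \<longrightarrow> X = 0"
  using assms pseudo_riemannian almost_product
  unfolding pseudo_riemannian_on_def almost_product_on_def by blast+

lemma dim_V: "dim (V x) = p"
  using almost_product x_in_U unfolding almost_product_on_def by blast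

lemma DERIV_g_line: "((\<lambda>t. g (x + t *\<^sub>R axis k 1) i j) has_real_derivative dg k i j) (at 0)"
proof -
  have "(\<lambda>y. g y i j) differentiable (at x)"
    using pseudo_riemannian x_in_U unfolding pseudo_riemannian_on_def by blast
  then show ?thesis unfolding dg_def by (rule has_real_derivative_pd)
qed

lemma DERIV_vmat_line: "((\<lambda>t. vmat g V (x + t *\<^sub>R axis k 1) $ i $ j) has_real_derivative dP k $ i $ j) (at 0)"
proof -
  have "(\<lambda>y. vmat g V y $ i $ j) differentiable (at x)"
    using almost_product x_in_U unfolding almost_product_on_def by blast
  then show ?thesis
    unfolding dP_def vec_lambda_beta by (rule has_real_derivative_pd)
qed

lemma metric_symmetric: "transpose G = G"
  using g_symmetric[OF x_in_U] by (simp add: G_def transpose_def vec_eq_iff)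

lemma metric_invertible: "invertible G"
  unfolding G_def invertible_det_nz using vmat_hypotheses(2)[OF x_in_U] .

lemma dg_symmetric: "dg k i j = dg k j i"
  unfolding dg_def by (rule pd_cong[OF open_U x_in_U]) (rule g_symmetric)

lemma christ_lowered: "(\<Sum>e\<in>UNIV. christ g x e a b * g x e c) = (1/2) * (dg a c b + dg b c a - dg c a b)"
proof -
  define F where "F d = dg a d b + dg b d a - dg d a b" for d
  have "christ g x e a b * g x e c = (1/2) * (\<Sum>d\<in>UNIV. G$c$e * matrix_inv G $ e $ d * F d)" for e
    using g_symmetric[OF x_in_U, of e c]
    unfolding christ_def ginv_def dg_def[symmetric] G_def[symmetric] F_def
    by (simp add: G_def sum_distrib_left sum_distrib_right mult_ac)
  then have "(\<Sum>e\<in>UNIV. christ g x e a b * g x e c) = (1/2) * (\<Sum>e\<in>UNIV. \<Sum>d\<in>UNIV. G$c$e * matrix_inv G $ e $ d * F d)"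
    by (simp add: sum_distrib_left)
  also have "(\<Sum>e\<in>UNIV. \<Sum>d\<in>UNIV. G$c$e * matrix_inv G $ e $ d * F d) = (\<Sum>d\<in>UNIV. (G ** matrix_inv G) $ c $ d * F d)"
    by (subst sum.swap) (simp add: matrix_matrix_mult_def sum_distrib_right)
  also have "\<dots> = F c"
    unfolding matrix_inv_right[OF metric_invertible] by (rule sum_mat1_left)
  finally show ?thesis unfolding F_def .
qed

lemma metric_compatible:
  "dg a i c = (\<Sum>e\<in>UNIV. christ g x e a i * g x e c) + (\<Sum>e\<in>UNIV. christ g x e a c * g x i e)"
proof -
  have "(\<Sum>e\<in>UNIV. christ g x e a c * g x i e) = (\<Sum>e\<in>UNIV. christ g x e a c * g x e i)"
    using g_symmetric[OF x_in_U] by simp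
  then show ?thesis
    unfolding christ_lowered using dg_symmetric[of a c i] dg_symmetric[of i c a] dg_symmetric[of c a i]
    by (simp add: field_simps)
qed

lemma vmat_idempotent_at: "y \<in> U \<Longrightarrow> vmat g V y ** vmat g V y = vmat g V y"
  by (rule vmat_idempotent[where g=g and V=V and x=y, OF vmat_hypotheses])

lemma vcov_symmetric: "y \<in> U \<Longrightarrow> vcov g V y b c = vcov g V y c b"
proof -
  assume y: "y \<in> U"
  have "(transpose (vmat g V y) ** (\<chi> a b. g y a b)) $ b $ c = ((\<chi> a b. g y a b) ** vmat g V y) $ b $ c"
    using vmat_self_adjoint[where g=g and V=V and x=y, OF vmat_hypotheses[OF y]] by simp
  then have "(\<Sum>i\<in>UNIV. vmat g V y $ i $ b * g y i c) = (\<Sum>i\<in>UNIV. g y b i * vmat g V y $ i $ c)"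
    by (simp add: matrix_matrix_mult_def transpose_def)
  also have "\<dots> = (\<Sum>i\<in>UNIV. vmat g V y $ i $ c * g y i b)"
    using g_symmetric[OF y] by (simp add: mult.commute)
  finally show ?thesis unfolding vcov_eq_sum .
qed

lemma cov2_metric_eq_0: "cov2 g g x a b c = 0"
  unfolding cov2_def using metric_compatible[of a b c] dg_def by simp

lemma DERIV_vcov_line:
  "((\<lambda>t. vcov g V (x + t *\<^sub>R axis a 1) b c) has_real_derivative
     (\<Sum>i\<in>UNIV. dP a $ i $ b * g x i c + P $ i $ b * dg a i c)) (at 0)"
proof -
  have "((\<lambda>t. \<Sum>i\<in>UNIV. vmat g V (x + t *\<^sub>R axis a 1) $ i $ b * g (x + t *\<^sub>R axis a 1) i c) has_real_derivative
     (\<Sum>i\<in>UNIV. dP a $ i $ b * g (x + 0 *\<^sub>R axis a 1) i c + dg a i c * vmat g V (x + 0 *\<^sub>R axis a 1) $ i $ b)) (at 0)"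
    by (intro DERIV_sum DERIV_mult DERIV_vmat_line DERIV_g_line)
  then show ?thesis unfolding vcov_eq_sum P_def by (simp add: mult.commute)
qed

lemma cov2_vcov_eq: "cov2 g (vcov g V) x a b c = (\<Sum>i\<in>UNIV. N a $ i $ b * g x i c)"
proof -
  have vcov_x: "vcov g V x b c = (\<Sum>i\<in>UNIV. P $ i $ b * g x i c)" for b c
    unfolding vcov_eq_sum P_def ..
  have pd_vcov: "pd (\<lambda>y. vcov g V y b c) a x = (\<Sum>i\<in>UNIV. dP a $ i $ b * g x i c + P $ i $ b * dg a i c)"
    by (rule pd_eqI[OF DERIV_vcov_line])
  have Chr_P: "(\<Sum>i\<in>UNIV. P$i$b * (\<Sum>e\<in>UNIV. christ g x e a i * g x e c)) = (\<Sum>i\<in>UNIV. (Chr a ** P)$i$b * g x i c)"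
    unfolding Chr_def matrix_matrix_mult_def
    by (simp only: vec_lambda_beta sum_distrib_left sum_distrib_right, subst sum.swap) (simp add: mult_ac)
  have christ_vcov_right: "(\<Sum>i\<in>UNIV. P$i$b * (\<Sum>e\<in>UNIV. christ g x e a c * g x i e)) = (\<Sum>e\<in>UNIV. christ g x e a c * vcov g V x b e)"
    unfolding vcov_x
    by (simp only: sum_distrib_left, subst sum.swap) (simp add: mult_ac)
  have P_Chr: "(\<Sum>e\<in>UNIV. christ g x e a b * vcov g V x e c) = (\<Sum>i\<in>UNIV. (P ** Chr a)$i$b * g x i c)"
    unfolding vcov_x Chr_def matrix_matrix_mult_def
    by (simp only: vec_lambda_beta sum_distrib_left sum_distrib_right, subst sum.swap) (simp add: mult_ac)
  have "cov2 g (vcov g V) x a b c = (\<Sum>i\<in>UNIV. dP a $ i $ b * g x i c) + (\<Sum>i\<in>UNIV. P $ i $ b * dg a i c)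
      - (\<Sum>e\<in>UNIV. christ g x e a b * vcov g V x e c) - (\<Sum>e\<in>UNIV. christ g x e a c * vcov g V x b e)"
    unfolding cov2_def pd_vcov by (simp add: sum.distrib)
  also have "(\<Sum>i\<in>UNIV. P $ i $ b * dg a i c) = (\<Sum>i\<in>UNIV. P$i$b * (\<Sum>e\<in>UNIV. christ g x e a i * g x e c))
       + (\<Sum>i\<in>UNIV. P$i$b * (\<Sum>e\<in>UNIV. christ g x e a c * g x i e))"
    by (simp add: metric_compatible distrib_left sum.distrib)
  finally show ?thesis
    unfolding Chr_P christ_vcov_right P_Chr N_def by (simp add: algebra_simps sum.distrib sum_subtractf)
qed

lemma cov2_vcov_symmetric: "cov2 g (vcov g V) x a b c = cov2 g (vcov g V) x a c b"
proof -
  have "pd (\<lambda>y. vcov g V y b c) a x = pd (\<lambda>y. vcov g V y c b) a x"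
    by (rule pd_cong[OF open_U x_in_U]) (rule vcov_symmetric)
  then show ?thesis
    unfolding cov2_def using vcov_symmetric[OF x_in_U] by simp
qed

lemma dP_projector: "dP k ** P + P ** dP k = dP k"
proof -
  have "(\<Sum>l\<in>UNIV. dP k $ i $ l * P $ l $ j + P $ i $ l * dP k $ l $ j) = dP k $ i $ j" for i j
  proof -
    have "((\<lambda>t. \<Sum>l\<in>UNIV. vmat g V (x + t *\<^sub>R axis k 1) $ i $ l * vmat g V (x + t *\<^sub>R axis k 1) $ l $ j)
        has_real_derivative (\<Sum>l\<in>UNIV. dP k $ i $ l * vmat g V (x + 0 *\<^sub>R axis k 1) $ l $ j
          + dP k $ l $ j * vmat g V (x + 0 *\<^sub>R axis k 1) $ i $ l)) (at 0)"
      by (intro DERIV_sum DERIV_mult DERIV_vmat_line)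
    then have "pd (\<lambda>y. (vmat g V y ** vmat g V y) $ i $ j) k x
        = (\<Sum>l\<in>UNIV. dP k $ i $ l * P $ l $ j + P $ i $ l * dP k $ l $ j)"
      unfolding matrix_matrix_mult_def P_def by (intro pd_eqI) (simp add: mult.commute)
    moreover have "pd (\<lambda>y. (vmat g V y ** vmat g V y) $ i $ j) k x = pd (\<lambda>y. vmat g V y $ i $ j) k x"
      by (rule pd_cong[OF open_U x_in_U]) (simp add: vmat_idempotent_at)
    ultimately show ?thesis unfolding dP_def by simp
  qed
  then show ?thesis
    by (simp add: vec_eq_iff matrix_matrix_mult_def sum.distrib)
qed

lemma N_apply: "N k *v Z = dP k *v Z + Chr k *v (P *v Z) - P *v (Chr k *v Z)"
  unfolding N_def
  by (simp add: matrix_vector_mult_add_rdistrib matrix_vector_mult_diff_rdistrib matrix_vector_mul_assoc)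

lemma dP_projector_apply: "dP k *v (P *v Y) + P *v (dP k *v Y) = dP k *v Y"
proof -
  have "(dP k ** P + P ** dP k) *v Y = dP k *v Y"
    by (simp only: dP_projector)
  then show ?thesis
    by (simp add: matrix_vector_mult_add_rdistrib matrix_vector_mul_assoc)
qed

lemma cov2_vcov_eq_inner: "cov2 g (vcov g V) x a b c = (N a *v axis b 1) \<bullet> (G *v axis c 1)"
  unfolding cov2_vcov_eq
  by (simp add: inner_vec_def matrix_vector_mult_axis_nth G_def g_symmetric[OF x_in_U] mult.commute)

sublocale projector_derivative G P N
proof
  show "transpose G = G" by (rule metric_symmetric)
  show "invertible G" by (rule metric_invertible)
  show P_idempotent: "P *v (P *v Y) = P *v Y" for Y
    using vmat_idempotent_at[OF x_in_U] by (simp add: matrix_vector_mul_assoc P_def)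
  show "(P *v X) \<bullet> (G *v Y) = X \<bullet> (G *v (P *v Y))" for X Y
  proof -
    have "(P *v X) \<bullet> (G *v Y) = (X v* transpose P) \<bullet> (G *v Y)" by simp
    also have "\<dots> = X \<bullet> (transpose P *v (G *v Y))" by (rule dot_lmul_matrix)
    also have "transpose P *v (G *v Y) = (transpose P ** G) *v Y"
      by (simp add: matrix_vector_mul_assoc)
    also have "transpose P ** G = G ** P"
      using vmat_self_adjoint[where g=g and V=V and x=x, OF vmat_hypotheses[OF x_in_U]] unfolding P_def G_def .
    finally show ?thesis by (simp add: matrix_vector_mul_assoc)
  qed
  show "N k *v (P *v Y) + P *v (N k *v Y) = N k *v Y" for k Y
    unfolding N_apply using dP_projector_apply[of k Y] P_idempotent
    by (simp add: matrix_vector_right_distrib matrix_vector_mult_diff_distrib algebra_simps)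
  show "(N k *v Y) \<bullet> (G *v Z) = (N k *v Z) \<bullet> (G *v Y)" for k Y Z
  proof -
    have "(G ** N k) $ c $ b = cov2 g (vcov g V) x k b c" for b c
      unfolding cov2_vcov_eq using g_symmetric[OF x_in_U]
      by (simp add: G_def matrix_matrix_mult_def mult.commute)
    then have GN: "transpose (G ** N k) = G ** N k"
      using cov2_vcov_symmetric[of k] by (simp add: transpose_def vec_eq_iff)
    have "(N k *v Y) \<bullet> (G *v Z) = Z \<bullet> ((G ** N k) *v Y)"
      using symmetric_matrix_inner_commute[OF metric_symmetric, of "N k *v Y" Z]
      by (simp add: matrix_vector_mul_assoc)
    also have "\<dots> = Y \<bullet> ((G ** N k) *v Z)"
      using symmetric_matrix_inner_commute[OF GN] .
    also have "\<dots> = (N k *v Z) \<bullet> (G *v Y)"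
      using symmetric_matrix_inner_commute[OF metric_symmetric, of "N k *v Z" Y]
      by (simp add: matrix_vector_mul_assoc)
    finally show ?thesis .
  qed
qed

lemma dv_component_eq_cov2_vcov: "dv_component = cov2 g (vcov g V) x"
  by (intro ext) (simp add: dv_component_eq gprod_def cov2_vcov_eq_inner)

lemma hmat_eq_H: "hmat g V x = H"
  unfolding hmat_def P_def[symmetric] by (simp add: matrix_eq H_apply matrix_vector_mult_diff_rdistrib)

lemma Chr_apply_nth: "(Chr c *v W) $ d = (\<Sum>e\<in>UNIV. christ g x d c e * W $ e)"
  by (simp add: Chr_def matrix_vector_mult_def)

lemma covvec_vmat:
  "covvec g x Z (\<lambda>y. vmat g V y *v axis b 1) = (\<Sum>c\<in>UNIV. Z$c *\<^sub>R (dP c *v axis b 1 + Chr c *v (P *v axis b 1)))"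
proof -
  have "covvec g x Z (\<lambda>y. vmat g V y *v axis b 1) $ d =
      (\<Sum>c\<in>UNIV. Z$c * ((dP c *v axis b 1) $ d + (Chr c *v (P *v axis b 1)) $ d))" for d
    unfolding covvec_def P_def
    by (simp add: matrix_vector_mult_axis_nth Chr_apply_nth dP_def)
  then show ?thesis
    by (simp add: vec_eq_iff sum_component)
qed

lemma covvec_hmat:
  "covvec g x Z (\<lambda>y. hmat g V y *v axis b 1) = (\<Sum>c\<in>UNIV. Z$c *\<^sub>R (- (dP c *v axis b 1) + Chr c *v (H *v axis b 1)))"
proof -
  have "pd (\<lambda>y. (hmat g V y *v axis b 1) $ d) c x = - dP c $ d $ b" for c d
  proof -
    have "((\<lambda>t. (mat 1 :: real^'n^'n) $ d $ b - vmat g V (x + t *\<^sub>R axis c 1) $ d $ b)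
        has_real_derivative 0 - dP c $ d $ b) (at 0)"
      by (intro DERIV_diff DERIV_const DERIV_vmat_line)
    then show ?thesis
      unfolding hmat_def by (intro pd_eqI) (simp add: matrix_vector_mult_axis_nth)
  qed
  then have "covvec g x Z (\<lambda>y. hmat g V y *v axis b 1) $ d =
      (\<Sum>c\<in>UNIV. Z$c * ((- (dP c *v axis b 1)) $ d + (Chr c *v (H *v axis b 1)) $ d))" for d
    unfolding covvec_def hmat_eq_H by (simp add: matrix_vector_mult_axis_nth Chr_apply_nth)
  then show ?thesis
    by (simp add: vec_eq_iff sum_component)
qed

lemma Qv_eq_QV: "Qv g V x a b = QV (axis a 1) (axis b 1)"
proof -
  have "H *v (dP c *v W + Chr c *v (P *v W)) = N c *v (P *v W)" for c W
    unfolding H_apply N_apply using dP_projector_apply[of c W] P_idempotent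
    by (simp add: matrix_vector_right_distrib matrix_vector_mult_diff_distrib algebra_simps)
  then show ?thesis
    unfolding Qv_def hmat_eq_H covvec_vmat P_def[symmetric] QV_def Nv_def
    by (simp add: matrix_vector_mult_sum matrix_vector_mult_scaleR)
qed

lemma Qh_eq_QH: "Qh g V x a b = - QH (axis a 1) (axis b 1)"
proof -
  have "P *v (- (dP c *v W) + Chr c *v (H *v W)) = - (N c *v (H *v W))" for c W
    unfolding H_apply N_apply using dP_projector_apply[of c W] P_idempotent
    by (simp add: matrix_vector_right_distrib matrix_vector_mult_diff_distrib algebra_simps)
  then show ?thesis
    unfolding Qh_def hmat_eq_H covvec_hmat P_def[symmetric] QH_def Nv_def
    by (simp add: matrix_vector_mult_sum matrix_vector_mult_scaleR sum_negf)
qed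

lemma totally_geodesic_at_iff:
  "(\<forall>a b. Sv g V x a b = 0 \<and> Sh g V x a b = 0) \<longleftrightarrow> (\<forall>a b c. sym3 (cov2 g (vcov g V) x) a b c = 0)"
proof -
  have "Sv g V x a b = 0 \<longleftrightarrow> QV (axis a 1) (axis b 1) + QV (axis b 1) (axis a 1) = 0" for a b
    unfolding Sv_def Qv_eq_QV by simp
  moreover have "Sh g V x a b = - ((1/2) *\<^sub>R (QH (axis a 1) (axis b 1) + QH (axis b 1) (axis a 1)))" for a b
    unfolding Sh_def Qh_eq_QH by (simp add: algebra_simps)
  then have "Sh g V x a b = 0 \<longleftrightarrow> QH (axis a 1) (axis b 1) + QH (axis b 1) (axis a 1) = 0" for a b
    by simp
  ultimately show ?thesis
    unfolding dv_component_eq_cov2_vcov[symmetric] sym3_dv_component_eq_0_iff by simp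
qed

lemma cov2_vcov_metric_combination:
  "cov2 g (\<lambda>y b c. \<alpha> * vcov g V y b c + \<beta> * g y b c) x = (\<lambda>a b c. \<alpha> * cov2 g (vcov g V) x a b c)"
proof (intro ext)
  fix a b c
  have "((\<lambda>t. \<alpha> * vcov g V (x + t *\<^sub>R axis a 1) b c + \<beta> * g (x + t *\<^sub>R axis a 1) b c) has_real_derivative
      \<alpha> * (\<Sum>i\<in>UNIV. dP a $ i $ b * g x i c + P $ i $ b * dg a i c) + \<beta> * dg a b c) (at 0)"
    by (intro DERIV_add DERIV_cmult DERIV_vcov_line DERIV_g_line)
  then have "pd (\<lambda>y. \<alpha> * vcov g V y b c + \<beta> * g y b c) a x
      = \<alpha> * pd (\<lambda>y. vcov g V y b c) a x + \<beta> * pd (\<lambda>y. g y b c) a x"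
    using pd_eqI[OF DERIV_vcov_line] unfolding dg_def by (simp add: pd_eqI)
  then have "cov2 g (\<lambda>y b c. \<alpha> * vcov g V y b c + \<beta> * g y b c) x a b c
      = \<alpha> * cov2 g (vcov g V) x a b c + \<beta> * cov2 g g x a b c"
    unfolding cov2_def by (simp add: algebra_simps sum.distrib sum_distrib_left)
  then show "cov2 g (\<lambda>y b c. \<alpha> * vcov g V y b c + \<beta> * g y b c) x a b c = \<alpha> * cov2 g (vcov g V) x a b c"
    using cov2_metric_eq_0 by simp
qed

lemma trace_vcov: "(\<Sum>a\<in>UNIV. \<Sum>b\<in>UNIV. ginv g x a b * vcov g V x a b) = real p"
proof -
  have "(\<Sum>b\<in>UNIV. ginv g x a b * vcov g V x a b) = P $ a $ a" for a
  proof -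
    have "(\<Sum>b\<in>UNIV. ginv g x a b * vcov g V x a b)
        = (\<Sum>b\<in>UNIV. \<Sum>i\<in>UNIV. matrix_inv G $ a $ b * (P $ i $ a * G $ b $ i))"
      unfolding vcov_eq_sum ginv_def G_def P_def using g_symmetric[OF x_in_U]
      by (simp add: sum_distrib_left)
    also have "\<dots> = (\<Sum>i\<in>UNIV. P $ i $ a * (matrix_inv G ** G) $ a $ i)"
      by (subst sum.swap) (simp add: matrix_matrix_mult_def sum_distrib_left mult_ac)
    also have "\<dots> = P $ a $ a"
      unfolding matrix_inv_left[OF metric_invertible] by (rule sum_mat1_right)
    finally show ?thesis .
  qed
  then have "(\<Sum>a\<in>UNIV. \<Sum>b\<in>UNIV. ginv g x a b * vcov g V x a b) = trace P"
    by (simp add: trace_def)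
  also have "\<dots> = real p"
    using trace_idempotent[OF vmat_idempotent_at[OF x_in_U]] range_vmat[where g=g and V=V and x=x, OF vmat_hypotheses[OF x_in_U]]
      dim_V unfolding P_def by simp
  finally show ?thesis .
qed

lemma trace_metric: "(\<Sum>a\<in>UNIV. \<Sum>b\<in>UNIV. ginv g x a b * g x a b) = real CARD('n)"
proof -
  have "(\<Sum>b\<in>UNIV. ginv g x a b * g x a b) = (matrix_inv G ** G) $ a $ a" for a
    unfolding ginv_def G_def using g_symmetric[OF x_in_U] by (simp add: matrix_matrix_mult_def)
  then show ?thesis
    unfolding matrix_inv_left[OF metric_invertible] by (simp add: mat_def)
qed

lemma trace_hcov: "(\<Sum>a\<in>UNIV. \<Sum>b\<in>UNIV. ginv g x a b * hcov g V x a b) = real CARD('n) - real p"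
  unfolding hcov_eq using trace_vcov trace_metric by (simp add: right_diff_distrib sum_subtractf)

lemma sym3_cov2_vcov_eq_metric_form:
  assumes "\<forall>a b c. sym3 (cov2 g (vcov g V) x) a b c = sym3 (\<lambda>a b c. g x a b * s c) a b c"
  shows "\<forall>a b c. sym3 (cov2 g (vcov g V) x) a b c = 0"
proof -
  have "(\<lambda>a b c. G $ a $ b * s c) = (\<lambda>a b c. g x a b * s c)"
    by (simp add: G_def)
  then show ?thesis
    using sym3_dv_component_eq_metric_form[of s] assms unfolding dv_component_eq_cov2_vcov by simp
qed

lemma p_le_dimension: "p \<le> CARD('n)"
  using dim_V dim_subset_UNIV[of "V x"] by simp

lemma vcov_hcov_symmetric:
  "vcov g V x a b = vcov g V x b a" "hcov g V x a b = hcov g V x b a"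
  using vcov_symmetric[OF x_in_U, of a b] g_symmetric[OF x_in_U, of a b] by (simp_all add: hcov_eq)

lemma trace_traceless_combination:
  "(\<Sum>a\<in>UNIV. \<Sum>b\<in>UNIV. ginv g x a b * (C * (real (CARD('n) - p) * vcov g V x a b - real p * hcov g V x a b))) = 0"
proof -
  have "(\<Sum>a\<in>UNIV. \<Sum>b\<in>UNIV. ginv g x a b * (C * (real (CARD('n) - p) * vcov g V x a b - real p * hcov g V x a b)))
      = C * (real (CARD('n) - p) * (\<Sum>a\<in>UNIV. \<Sum>b\<in>UNIV. ginv g x a b * vcov g V x a b)
          - real p * (\<Sum>a\<in>UNIV. \<Sum>b\<in>UNIV. ginv g x a b * hcov g V x a b))"
    by (simp add: sum_distrib_left right_diff_distrib sum_subtractf algebra_simps)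
  then show ?thesis
    unfolding trace_vcov trace_hcov using p_le_dimension by (simp add: of_nat_diff algebra_simps)
qed

lemma cov2_traceless_combination:
  "cov2 g (\<lambda>y a b. C * (real (CARD('n) - p) * vcov g V y a b - real p * hcov g V y a b)) x
    = (\<lambda>a b c. C * real CARD('n) * cov2 g (vcov g V) x a b c)"
proof -
  have combination: "(\<lambda>y a b. C * (real (CARD('n) - p) * vcov g V y a b - real p * hcov g V y a b))
      = (\<lambda>y a b. C * real CARD('n) * vcov g V y a b + (- C * real p) * g y a b)"
    using p_le_dimension by (intro ext) (simp add: hcov_eq of_nat_diff algebra_simps)
  show ?thesis
    unfolding combination by (rule cov2_vcov_metric_combination)
qed

lemma sym3_cov2_vcov_eq_0_of_conformal:
  assumes "C \<noteq> 0"
    and "\<forall>a b c. sym3 (cov2 g (\<lambda>y a b. C * (real (CARD('n) - p) * vcov g V y a b - real p * hcov g V y a b)) x) a b c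
      = sym3 (\<lambda>a b c. g x a b * t c) a b c"
  shows "\<forall>a b c. sym3 (cov2 g (vcov g V) x) a b c = 0"
proof -
  define n where "n = real CARD('n)"
  have "n \<noteq> 0" unfolding n_def by simp
  have "sym3 (cov2 g (vcov g V) x) a b c = sym3 (\<lambda>a b c. g x a b * (t c / (C * n))) a b c" for a b c
    using assms(2) \<open>C \<noteq> 0\<close> \<open>n \<noteq> 0\<close> sym3_scale[of "C * n" "cov2 g (vcov g V) x" a b c]
    unfolding cov2_traceless_combination n_def[symmetric] by (simp add: sym3_def field_simps)
  then show ?thesis
    by (intro sym3_cov2_vcov_eq_metric_form[where s = "\<lambda>c. t c / (C * n)"]) simp
qed

end

section \<open>Killing and conformal tensors built from v and h\<close>

lemma totally_geodesic_on_iff_sym3_cov2_vcov: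
  assumes "pseudo_riemannian_on U g" and "almost_product_on U g V p"
  shows "totally_geodesic_on U g V \<longleftrightarrow> (\<forall>x\<in>U. \<forall>a b c. sym3 (cov2 g (vcov g V) x) a b c = 0)"
  unfolding totally_geodesic_on_def
  using almost_product_point.totally_geodesic_at_iff[OF almost_product_point.intro[OF assms]] by blast

lemma killing_tensor_on_vcov_hcov_iff:
  assumes "pseudo_riemannian_on U g" and "almost_product_on U g V p"
  shows "killing_tensor_on U g (\<lambda>x a b. C * vcov g V x a b + D * hcov g V x a b)
    \<longleftrightarrow> C = D \<or> totally_geodesic_on U g V"
proof -
  have combination: "(\<lambda>x a b. C * vcov g V x a b + D * hcov g V x a b)
      = (\<lambda>x a b. (C - D) * vcov g V x a b + D * g x a b)"
    by (intro ext) (simp add: hcov_eq algebra_simps)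
  have "sym3 (cov2 g (\<lambda>x a b. C * vcov g V x a b + D * hcov g V x a b) x) a b c
      = (C - D) * sym3 (cov2 g (vcov g V) x) a b c" if "x \<in> U" for x a b c
    unfolding combination
      almost_product_point.cov2_vcov_metric_combination[OF almost_product_point.intro[OF assms that]]
    by (rule sym3_scale)
  moreover have "C * vcov g V x a b + D * hcov g V x a b = C * vcov g V x b a + D * hcov g V x b a"
    if "x \<in> U" for x a b
    using almost_product_point.vcov_hcov_symmetric[OF almost_product_point.intro[OF assms that]] by simp
  ultimately show ?thesis
    unfolding killing_tensor_on_def totally_geodesic_on_iff_sym3_cov2_vcov[OF assms] by auto
qed

lemma conformal_tensor_on_traceless_combination_iff:
  fixes U :: "(real^'n::finite) set"
  assumes "pseudo_riemannian_on U g" and "almost_product_on U g V p" and "q = CARD('n) - p"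
  shows "conformal_tensor_on U g (\<lambda>x a b. C * (real q * vcov g V x a b - real p * hcov g V x a b))
    \<longleftrightarrow> C = 0 \<or> totally_geodesic_on U g V"
    (is "conformal_tensor_on U g ?T \<longleftrightarrow> _")
proof
  note point = almost_product_point.intro[OF assms(1,2)]
  assume "conformal_tensor_on U g ?T"
  then obtain t where "\<forall>x\<in>U. \<forall>a b c. sym3 (cov2 g ?T x) a b c = sym3 (\<lambda>a b c. g x a b * t x c) a b c"
    unfolding conformal_tensor_on_def by blast
  then have "\<forall>x\<in>U. \<forall>a b c. sym3 (cov2 g (vcov g V) x) a b c = 0" if "C \<noteq> 0"
    using almost_product_point.sym3_cov2_vcov_eq_0_of_conformal[OF point that] unfolding assms(3) by blast
  then show "C = 0 \<or> totally_geodesic_on U g V"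
    unfolding totally_geodesic_on_iff_sym3_cov2_vcov[OF assms(1,2)] by blast
next
  note point = almost_product_point.intro[OF assms(1,2)]
  assume "C = 0 \<or> totally_geodesic_on U g V"
  then have "sym3 (cov2 g ?T x) a b c = sym3 (\<lambda>a b c. g x a b * 0) a b c" if "x \<in> U" for x a b c
    using that sym3_scale[of "C * real CARD('n)" "cov2 g (vcov g V) x" a b c]
    unfolding totally_geodesic_on_iff_sym3_cov2_vcov[OF assms(1,2)] assms(3)
      almost_product_point.cov2_traceless_combination[OF point[OF that]]
    by (auto simp: sym3_def)
  moreover have "?T x a b = ?T x b a" "(\<Sum>a\<in>UNIV. \<Sum>b\<in>UNIV. ginv g x a b * ?T x a b) = 0"
    if "x \<in> U" for x a b
    using almost_product_point.vcov_hcov_symmetric[OF point[OF that]]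
      almost_product_point.trace_traceless_combination[OF point[OF that]] unfolding assms(3) by simp_all
  ultimately show "conformal_tensor_on U g ?T"
    unfolding conformal_tensor_on_def by (intro conjI ballI allI exI[of _ "\<lambda>_ _. 0"]) simp_all
qed

theorem corollary1:
  fixes U :: "(real^'n::finite) set" and g :: "'n tensor2"
    and V :: "real^'n \<Rightarrow> (real^'n) set" and p q :: nat
  assumes "pseudo_riemannian_on U g"
    and "almost_product_on U g V p"
    and "q = CARD('n) - p"
  shows "(totally_geodesic_on U g V \<longleftrightarrow>
            (\<forall>C D :: real. killing_tensor_on U g (\<lambda>x a b. C * vcov g V x a b + D * hcov g V x a b)))
       \<and> (totally_geodesic_on U g V \<longleftrightarrow>
            (\<forall>C :: real. conformal_tensor_on U g
               (\<lambda>x a b. C * (real q * vcov g V x a b - real p * hcov g V x a b))))"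
  unfolding killing_tensor_on_vcov_hcov_iff[OF assms(1,2)]
    conformal_tensor_on_traceless_combination_iff[OF assms]
  by (metis zero_neq_one)

end
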